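(* Let $1\le k\le n$ and let $a_{i,j}\in\mathbb C$ for $0\le i<j\le k$. If $$\sum_{0\le i<j\le k}a_{i,j}\,\mathrm{Tr}_{\{k+1,\dots,n\}}\big(|D_n^i\rangle\langle D_n^j|\big)=0,$$ then $a_{i,j}=0$ for all $0\le i<j\le k$.
   Context: Dicke states: $|D_n^i\rangle=\binom{n}{i}^{-1/2}\sum_{s\in\{0,1\}^n,\ \sum_js_j=i}|s_1\rangle\otimes\cdots\otimes|s_n\rangle$ in $(\mathbb C^2)^{\otimes n}$; $\mathrm{Tr}_{\{k+1,\dots,n\}}$ is the partial trace over qubits $k+1,\dots,n$ (for $k=n$ it is the identity map). *)

theory Defs
  imports Complex_Main
begin

text \<open>Computational basis states of m qubits are bit strings, represented as
  bool lists of length m (True = |1>). A vector in (C^2)^{\<otimes> m} is a function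
  on such strings, an operator is a kernel on pairs of strings (its matrix
  entries), both extended by 0 outside strings of length m.\<close>

definition bitstrings :: "nat \<Rightarrow> bool list set" where
  "bitstrings m = {s. length s = m}"

definition weight :: "bool list \<Rightarrow> nat" where
  "weight s = length (filter id s)"

definition dicke :: "nat \<Rightarrow> nat \<Rightarrow> bool list \<Rightarrow> complex" where
  "dicke n i s = (if length s = n \<and> weight s = i
                  then complex_of_real (1 / sqrt (real (n choose i))) else 0)"

definition outer :: "(bool list \<Rightarrow> complex) \<Rightarrow> (bool list \<Rightarrow> complex) \<Rightarrow> bool list \<Rightarrow> bool list \<Rightarrow> complex" where
  "outer u v = (\<lambda>s t. u s * cnj (v t))"

definition ptrace :: "nat \<Rightarrow> nat \<Rightarrow> (bool list \<Rightarrow> bool list \<Rightarrow> complex) \<Rightarrow> bool list \<Rightarrow> bool list \<Rightarrow> complex" where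
  "ptrace n k M = (\<lambda>s t. if length s = k \<and> length t = k
      then (\<Sum>u\<in>bitstrings (n - k). M (s @ u) (t @ u)) else 0)"

end

theory Submission
  imports Defs
begin

text \<open>Write \<open>E i j\<close> for \<open>Tr_{k+1..n} |D_n^i\<rangle>\<langle>D_n^j|\<close>. Its entry at \<open>(s, t)\<close> sums over
  padding strings \<open>u\<close> with \<open>|s| + |u| = i\<close> and \<open>|t| + |u| = j\<close> (\<open>|\<cdot>|\<close> the Hamming
  weight), so it vanishes unless \<open>(i, j) = (|s| + w, |t| + w)\<close> for some \<open>w \<ge> 0\<close>, and for
  \<open>w = 0\<close> only the all-zero padding contributes, giving a nonzero value. Evaluating the
  relation at \<open>(s, t)\<close> with \<open>|s| = i < |t| = j\<close> therefore isolates \<open>a i j\<close> once all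
  coefficients with larger second index are known to vanish; descending induction on
  \<open>j\<close> finishes the proof.\<close>

lemma finite_bitstrings: "finite (bitstrings m)"
  using finite_lists_length_eq[of "UNIV :: bool set" m] by (simp add: bitstrings_def)

lemma weight_append [simp]: "weight (s @ u) = weight s + weight u"
  unfolding weight_def by simp

lemma weight_le_length: "weight s \<le> length s"
  unfolding weight_def by (rule length_filter_le)

lemma weight_eq_0_iff: "weight u = 0 \<longleftrightarrow> u = replicate (length u) False"
  unfolding weight_def by (induction u) auto

lemma ex_bitstring_weight:
  assumes "i \<le> k"
  shows "\<exists>s. length s = k \<and> weight s = i"
  using assms by (intro exI[of _ "replicate i True @ replicate (k - i) False"])
    (simp add: weight_def)

lemma ptrace_outer_dicke:
  assumes "length s = k" "length t = k"
  shows "ptrace n k (outer (dicke n i) (dicke n j)) s t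
       = (\<Sum>u\<in>bitstrings (n - k). dicke n i (s @ u) * cnj (dicke n j (t @ u)))"
  using assms by (simp add: ptrace_def outer_def)

lemma ptrace_outer_dicke_nonzero_imp:
  assumes "length s = k" "length t = k"
    and "ptrace n k (outer (dicke n i) (dicke n j)) s t \<noteq> 0"
  shows "\<exists>w. i = weight s + w \<and> j = weight t + w"
proof (rule ccontr)
  assume no_shift: "\<nexists>w. i = weight s + w \<and> j = weight t + w"
  have "(\<Sum>u\<in>bitstrings (n - k). dicke n i (s @ u) * cnj (dicke n j (t @ u))) = 0"
    by (rule sum.neutral) (use no_shift in \<open>auto simp: dicke_def\<close>)
  with assms show False by (simp add: ptrace_outer_dicke)
qed

lemma ptrace_outer_dicke_same_weights:
  assumes "k \<le> n" "length s = k" "length t = k" "weight s = i" "weight t = j"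
  shows "ptrace n k (outer (dicke n i) (dicke n j)) s t
       = complex_of_real (1 / sqrt (real (n choose i) * real (n choose j)))"
proof -
  let ?z = "replicate (n - k) False"
  let ?f = "\<lambda>u. dicke n i (s @ u) * cnj (dicke n j (t @ u))"
  have z: "?z \<in> bitstrings (n - k)" by (simp add: bitstrings_def)
  have vanish: "\<forall>u\<in>bitstrings (n - k) - {?z}. ?f u = 0"
  proof
    fix u assume "u \<in> bitstrings (n - k) - {?z}"
    then have "weight u \<noteq> 0" using weight_eq_0_iff[of u] by (auto simp: bitstrings_def)
    with assms show "?f u = 0" by (auto simp: dicke_def)
  qed
  have "(\<Sum>u\<in>bitstrings (n - k). ?f u) = ?f ?z"
    using sum.mono_neutral_right[OF finite_bitstrings _ vanish] z by simp
  moreover have "weight ?z = 0" by (simp add: weight_eq_0_iff)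
  ultimately show ?thesis
    using assms by (simp add: ptrace_outer_dicke dicke_def real_sqrt_mult)
qed

lemma ptrace_outer_dicke_same_weights_nonzero:
  assumes "k \<le> n" "length s = k" "length t = k" "weight s = i" "weight t = j"
  shows "ptrace n k (outer (dicke n i) (dicke n j)) s t \<noteq> 0"
proof -
  have "i \<le> n" "j \<le> n"
    using assms weight_le_length[of s] weight_le_length[of t] by simp_all
  then show ?thesis by (simp add: ptrace_outer_dicke_same_weights[OF assms])
qed

lemma sum_ptrace_outer_dicke_triangular:
  assumes "k \<le> n" "length s = k" "length t = k" "weight s = i" "weight t = j"
    and "i < j" "j \<le> k"
    and above: "\<And>i' j'. i' < j' \<Longrightarrow> j' \<le> k \<Longrightarrow> j < j' \<Longrightarrow> a i' j' = 0"
  shows "(\<Sum>(i', j')\<in>{(i', j'). i' < j' \<and> j' \<le> k}.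
            a i' j' * ptrace n k (outer (dicke n i') (dicke n j')) s t)
       = a i j * ptrace n k (outer (dicke n i) (dicke n j)) s t"
proof -
  let ?P = "{(i', j'). i' < j' \<and> j' \<le> k}"
  let ?f = "\<lambda>(i', j'). a i' j' * ptrace n k (outer (dicke n i') (dicke n j')) s t"
  have fin: "finite ?P" by (rule finite_subset[of _ "{..k} \<times> {..k}"]) auto
  have ij: "(i, j) \<in> ?P" using assms by simp
  have vanish: "\<forall>x\<in>?P - {(i, j)}. ?f x = 0"
  proof
    fix x assume "x \<in> ?P - {(i, j)}"
    then obtain i' j' where x: "x = (i', j')" "i' < j'" "j' \<le> k" "(i', j') \<noteq> (i, j)"
      by auto
    have "a i' j' * ptrace n k (outer (dicke n i') (dicke n j')) s t = 0"
    proof (cases "ptrace n k (outer (dicke n i') (dicke n j')) s t = 0")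
      case False
      then obtain w where "i' = i + w" "j' = j + w"
        using ptrace_outer_dicke_nonzero_imp assms by metis
      with x have "j < j'" by auto
      with x above show ?thesis by simp
    qed simp
    with x show "?f x = 0" by simp
  qed
  show ?thesis
    using sum.mono_neutral_right[OF fin _ vanish] ij by simp
qed

theorem mainTheorem17:
  fixes n k :: nat and a :: "nat \<Rightarrow> nat \<Rightarrow> complex"
  assumes "1 \<le> k" and "k \<le> n"
    and "(\<lambda>s t. \<Sum>(i, j)\<in>{(i, j). i < j \<and> j \<le> k}.
            a i j * ptrace n k (outer (dicke n i) (dicke n j)) s t) = (\<lambda>s t. 0)"
  shows "\<forall>i j. i < j \<and> j \<le> k \<longrightarrow> a i j = 0"
proof -
  have "a i j = 0" if "i < j" "j \<le> k" for i j
    using that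
  proof (induction "k - j" arbitrary: i j rule: less_induct)
    case less
    obtain s t where st: "length s = k" "weight s = i" "length t = k" "weight t = j"
      using ex_bitstring_weight less.prems by (metis less_imp_le order.trans)
    have above: "a i' j' = 0" if "i' < j'" "j' \<le> k" "j < j'" for i' j'
      using less.hyps that by simp
    have "a i j * ptrace n k (outer (dicke n i) (dicke n j)) s t = 0"
      using sum_ptrace_outer_dicke_triangular[OF assms(2) st(1,3,2,4) less.prems above]
        fun_cong[OF fun_cong[OF assms(3), of s], of t] by simp
    then show ?case
      using ptrace_outer_dicke_same_weights_nonzero[OF assms(2) st(1,3,2,4)] by simp
  qed
  then show ?thesis by blast
qed

end
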